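(* Let $q$ be a prime power, $k,b,t$ positive integers and $f:\mathbb{F}_q^k\to\mathrm{Im}(f)$ a function. For any subset $\{\boldsymbol{x}_1,\ldots,\boldsymbol{x}_M\}\subseteq\mathbb{F}_q^k$, \[ r_b^f(k,t)\ge N_b\big(\boldsymbol{B}_f^{(1)}(t,\boldsymbol{x}_1,\ldots,\boldsymbol{x}_M)\big). \] Moreover, if $|\mathrm{Im}(f)|\ge 2$ and $t>b-1$, then $r_b^f(k,t)\ge 2(t-b+1)$.
   Context: For $\boldsymbol{z}=(z_0,\ldots,z_{n-1})\in\mathbb{F}_q^n$, the $b$-symbol distance of $\boldsymbol{z},\boldsymbol{w}\in\mathbb{F}_q^n$ is $d_b(\boldsymbol{z},\boldsymbol{w})=$ the number of $i\in\{0,\ldots,n-1\}$ with $(z_i,\ldots,z_{i+b-1})\neq(w_i,\ldots,w_{i+b-1})$ (indices mod $n$). A systematic encoding $\mathrm{Enc}(\boldsymbol{x})=(\boldsymbol{x},p(\boldsymbol{x}))\in\mathbb{F}_q^{k+r}$ is a function-correcting $b$-symbol code for $f$ if $d_b(\mathrm{Enc}(\boldsymbol{x}_1),\mathrm{Enc}(\boldsymbol{x}_2))\ge 2t+1$ whenever $f(\boldsymbol{x}_1)\ne f(\boldsymbol{x}_2)$; $r_b^f(k,t)$ is the smallest $r$ for which one exists. For an $M\times M$ nonnegative integer matrix $\boldsymbol{B}$, $N_b(\boldsymbol{B})$ is the smallest $r$ such that there exist $\boldsymbol{p}_1,\ldots,\boldsymbol{p}_M\in\mathbb{F}_q^r$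 (in some ordering) with $d_b(\boldsymbol{p}_i,\boldsymbol{p}_j)\ge[\boldsymbol{B}]_{ij}$ for all $i,j$. $[\boldsymbol{B}_f^{(1)}(t,\boldsymbol{x}_1,\ldots,\boldsymbol{x}_M)]_{ij}=\max\{2t-b+2-d_b(\boldsymbol{x}_i,\boldsymbol{x}_j),0\}$ if $f(\boldsymbol{x}_i)\ne f(\boldsymbol{x}_j)$ and $0$ otherwise. *)

theory Defs
  imports Main
begin

text \<open>Vectors in F_q^n are lists of length n over a finite field type 'a (q = CARD('a)).\<close>

definition vecs :: "nat \<Rightarrow> 'a list set" where
  "vecs n = {x. length x = n}"

definition bsym_dist :: "nat \<Rightarrow> 'a list \<Rightarrow> 'a list \<Rightarrow> nat" where
  "bsym_dist b z w = card {i. i < length z \<and>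
      (\<exists>j<b. z ! ((i + j) mod length z) \<noteq> w ! ((i + j) mod length z))}"

definition fc_bsym_code :: "nat \<Rightarrow> nat \<Rightarrow> nat \<Rightarrow> ('a list \<Rightarrow> 'c) \<Rightarrow> nat \<Rightarrow> ('a list \<Rightarrow> 'a list) \<Rightarrow> bool" where
  "fc_bsym_code b k t f r p \<longleftrightarrow>
     (\<forall>x\<in>vecs k. length (p x) = r) \<and>
     (\<forall>x1\<in>vecs k. \<forall>x2\<in>vecs k. f x1 \<noteq> f x2 \<longrightarrow>
        bsym_dist b (x1 @ p x1) (x2 @ p x2) \<ge> 2 * t + 1)"

definition r_bf :: "nat \<Rightarrow> ('a::{finite,field} list \<Rightarrow> 'c) \<Rightarrow> nat \<Rightarrow> nat \<Rightarrow> nat" where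
  "r_bf b f k t = (LEAST r. \<exists>p::'a list \<Rightarrow> 'a list. fc_bsym_code b k t f r p)"

text \<open>N_b(B) for an M x M matrix B (entries B i j for i,j < M), over the field 'a.\<close>
definition N_b :: "'a::{finite,field} itself \<Rightarrow> nat \<Rightarrow> nat \<Rightarrow> (nat \<Rightarrow> nat \<Rightarrow> nat) \<Rightarrow> nat" where
  "N_b _ b M B = (LEAST r. \<exists>ps :: nat \<Rightarrow> 'a list.
      (\<forall>i<M. length (ps i) = r) \<and>
      (\<forall>i<M. \<forall>j<M. bsym_dist b (ps i) (ps j) \<ge> B i j))"

text \<open>The matrix B_f^(1)(t, x_1,...,x_M), 0-indexed.\<close>
definition B1 :: "('a list \<Rightarrow> 'c) \<Rightarrow> nat \<Rightarrow> nat \<Rightarrow> 'a list list \<Rightarrow> nat \<Rightarrow> nat \<Rightarrow> nat" where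
  "B1 f b t xs i j = (if f (xs ! i) \<noteq> f (xs ! j)
      then nat (2 * int t - int b + 2 - int (bsym_dist b (xs ! i) (xs ! j))) else 0)"

end

theory Submission
  imports Defs
begin

text \<open>For codewords \<open>(x, p x)\<close> and \<open>(y, p y)\<close> the b-symbol windows lying inside the information
  or the redundancy part are windows of \<open>x\<close> or of \<open>p x\<close>; of the windows crossing the two seams, for
  each offset \<open>m < b\<close> at most one differs without a wrap-around window of \<open>x\<close> or \<open>p x\<close> differing
  too. Hence \<open>d\<^sub>b((x, p x), (y, p y)) \<le> d\<^sub>b(x, y) + d\<^sub>b(p x, p y) + b - 1\<close>, so the redundancy parts of any
  code realise the distance matrix \<open>B1 f b t xs\<close>. For the second bound take inputs with distinct values
  of \<open>f\<close> that differ in a single coordinate (they occur on a coordinate-by-coordinate path between any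
  two inputs with distinct values); their b-symbol distance is at most \<open>b\<close>, giving
  \<open>2t + 1 \<le> b + r + b - 1\<close>.\<close>

definition window_differs :: "nat \<Rightarrow> 'a list \<Rightarrow> 'a list \<Rightarrow> nat \<Rightarrow> bool" where
  "window_differs b z w i \<longleftrightarrow>
     (\<exists>l<b. z ! ((i + l) mod length z) \<noteq> w ! ((i + l) mod length z))"

lemma not_window_differs_self [simp]: "\<not> window_differs b z z i"
  unfolding window_differs_def by simp

lemma bsym_dist_eq_card_window_differs:
  "bsym_dist b z w = card {i. i < length z \<and> window_differs b z w i}"
  unfolding bsym_dist_def window_differs_def by simp

lemma bsym_dist_le_length: "bsym_dist b z w \<le> length z"
  unfolding bsym_dist_eq_card_window_differs
  by (rule order_trans[OF card_mono[of "{..<length z}"]]) auto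

lemma window_differs_rotate:
  assumes "length w = length z" "z \<noteq> []"
  shows "window_differs b (rotate s z) (rotate s w) i \<longleftrightarrow>
         window_differs b z w ((i + s) mod length z)"
proof -
  have "(s + (i + l) mod length z) mod length z = ((i + s) mod length z + l) mod length z" for l
    by (simp add: mod_simps ac_simps)
  then show ?thesis
    unfolding window_differs_def using assms by (simp add: nth_rotate)
qed

lemma window_differs_append_swap:
  assumes "length y = length x" "length q = length p" "x @ p \<noteq> []"
  shows "window_differs b (x @ p) (y @ q) i \<longleftrightarrow>
         window_differs b (p @ x) (q @ y) ((i + length p) mod (length x + length p))"
proof -
  have "rotate (length p) (p @ x) = x @ p" "rotate (length p) (q @ y) = y @ q"
    using rotate_append assms(2) by metis+
  moreover have "length (q @ y) = length (p @ x)" "p @ x \<noteq> []"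
    using assms by auto
  ultimately show ?thesis
    using window_differs_rotate[of "q @ y" "p @ x" b "length p" i]
    by (simp add: add.commute[of "length p"])
qed

lemma window_differs_append_left:
  assumes "length y = length x" "length q = length p" "i + b \<le> length x"
  shows "window_differs b (x @ p) (y @ q) i \<longleftrightarrow> window_differs b x y i"
  unfolding window_differs_def using assms by (auto simp: nth_append)

lemma window_differs_append_right:
  assumes "length y = length x" "length q = length p" "j + b \<le> length p"
  shows "window_differs b (x @ p) (y @ q) (length x + j) \<longleftrightarrow> window_differs b p q j"
  unfolding window_differs_def using assms by (auto simp: nth_append add.assoc)

lemma eq_of_not_window_differs:
  assumes "\<not> window_differs b z w i" "length w = length z" "length z \<le> b"
  shows "z = w"
proof (rule nth_equalityI)
  fix j assume j: "j < length z"
  define n where "n = length z"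
  define l where "l = (j + n - i mod n) mod n"
  have "0 < n" using j n_def by linarith
  then have "l < n" unfolding l_def by simp
  then have "l < b" using assms(3) n_def by simp
  moreover have "(i + l) mod n = j"
  proof -
    have "i mod n < n" using \<open>0 < n\<close> by simp
    have "(i + l) mod n = (i mod n + (j + n - i mod n)) mod n"
      unfolding l_def by (simp add: mod_simps)
    also have "\<dots> = j" using j n_def \<open>i mod n < n\<close> by simp
    finally show ?thesis .
  qed
  ultimately show "z ! j = w ! j" using assms(1) unfolding window_differs_def n_def by auto
qed (use assms in simp)

text \<open>With both wrap-around windows clean, the difference seen by the crossing window can only lie
  beyond the end of \<open>p\<close>.\<close>

lemma length_lt_of_crossing_window_differs:
  assumes len: "length y = length x" "length q = length p"
    and m: "m \<le> length x" "m \<le> length p"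
    and clean: "\<not> window_differs b x y (length x - m)" "\<not> window_differs b p q (length p - m)"
    and crossing: "window_differs b (x @ p) (y @ q) (length x - m)"
  shows "m + length p < b"
proof (rule ccontr)
  assume "\<not> m + length p < b"
  obtain l where "l < b" and l: "l < m + length p"
    and differs: "(x @ p) ! ((length x - m + l) mod length (x @ p)) \<noteq>
                  (y @ q) ! ((length x - m + l) mod length (x @ p))"
    using crossing \<open>\<not> m + length p < b\<close> len unfolding window_differs_def by auto
  show False
  proof (cases "l < m")
    case True
    then have "length x - m + l < length x" using m by linarith
    then have "x ! ((length x - m + l) mod length x) \<noteq> y ! ((length x - m + l) mod length x)"
      using differs len by (simp add: nth_append)
    then show False using clean(1) \<open>l < b\<close> unfolding window_differs_def by blast
  next
    case False
    then have "length x - m + l = length x + (l - m)" "length p - m + l = length p + (l - m)"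
      and "l - m < length p"
      using m l by simp_all
    then have "p ! ((length p - m + l) mod length p) \<noteq> q ! ((length p - m + l) mod length p)"
      using differs l len by (simp add: nth_append)
    then show False using clean(2) \<open>l < b\<close> unfolding window_differs_def by blast
  qed
qed

text \<open>Rotating \<open>x @ p\<close> to \<open>p @ x\<close> exchanges the two crossing windows, so both \<open>x\<close> and \<open>p\<close> are
  shorter than \<open>b\<close> and hence covered by a clean window.\<close>

lemma crossing_windows_not_both_differ:
  assumes len: "length y = length x" "length q = length p"
    and m: "0 < m" "m \<le> length x" "m \<le> length p"
    and clean: "\<not> window_differs b x y (length x - m)" "\<not> window_differs b p q (length p - m)"
    and crossing: "window_differs b (x @ p) (y @ q) (length x - m)"
  shows "\<not> window_differs b (x @ p) (y @ q) (length x + length p - m)"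
proof
  assume "window_differs b (x @ p) (y @ q) (length x + length p - m)"
  moreover have "x @ p \<noteq> []" using crossing len by auto
  moreover have "(length x + length p - m + length p) mod (length x + length p) = length p - m"
    using m by (simp add: le_mod_geq)
  ultimately have "window_differs b (p @ x) (q @ y) (length p - m)"
    using window_differs_append_swap[OF len] by metis
  then have "m + length x < b"
    using length_lt_of_crossing_window_differs[OF len(2,1) m(3,2) clean(2,1)] by blast
  moreover have "m + length p < b"
    using length_lt_of_crossing_window_differs[OF len m(2,3) clean crossing] .
  ultimately have "x = y" "p = q"
    using eq_of_not_window_differs[OF clean(1) len(1)] eq_of_not_window_differs[OF clean(2) len(2)]
    by simp_all
  then show False using crossing by simp
qed

lemma window_differs_append_cases:
  assumes len: "length y = length x" "length q = length p"
    and i: "i < length x + length p" and differs: "window_differs b (x @ p) (y @ q) i"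
  obtains "i + b \<le> length x" "window_differs b x y i"
  | j where "i = length x + j" "j + b \<le> length p" "window_differs b p q j"
  | m where "0 < m" "m < b" "m \<le> length x" "i = length x - m"
  | m where "0 < m" "m < b" "m \<le> length p" "i = length x + length p - m"
proof (cases "i < length x")
  case True
  show ?thesis
  proof (cases "i + b \<le> length x")
    case True
    then show ?thesis using that(1) window_differs_append_left[OF len] differs by blast
  next
    case False
    then show ?thesis using that(3)[of "length x - i"] \<open>i < length x\<close> by simp
  qed
next
  case False
  then obtain j where j: "i = length x + j" "j < length p"
    using i by (metis add_diff_inverse_nat add_less_cancel_left)
  show ?thesis
  proof (cases "j + b \<le> length p")
    case True
    then show ?thesis using that(2) window_differs_append_right[OF len] differs j by blast
  next
    case False
    then show ?thesis using that(4)[of "length p - j"] j by simp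
  qed
qed

definition inner_differing_windows :: "nat \<Rightarrow> 'a list \<Rightarrow> 'a list \<Rightarrow> nat set" where
  "inner_differing_windows b z w = {i. i + b \<le> length z \<and> window_differs b z w i}"

text \<open>Offsets \<open>m < b\<close> of differing windows starting \<open>m\<close> positions before the seam \<open>e\<close>;
  \<open>m \<le> s\<close> keeps the start inside the block of length \<open>s\<close> ending at \<open>e\<close>.\<close>

definition seam_differing_offsets :: "nat \<Rightarrow> 'a list \<Rightarrow> 'a list \<Rightarrow> nat \<Rightarrow> nat \<Rightarrow> nat set" where
  "seam_differing_offsets b z w e s = {m. 0 < m \<and> m < b \<and> m \<le> s \<and> window_differs b z w (e - m)}"

lemma finite_seam_differing_offsets: "finite (seam_differing_offsets b z w e s)"
  unfolding seam_differing_offsets_def by (auto intro: finite_subset[of _ "{..<b}"])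

lemma card_inner_plus_card_wrapping_le_bsym_dist:
  "card (inner_differing_windows b z w) + card (seam_differing_offsets b z w (length z) (length z))
   \<le> bsym_dist b z w"
  (is "card ?I + card ?W \<le> _")
proof -
  have "finite ?I" unfolding inner_differing_windows_def
    by (auto intro: finite_subset[of _ "{..length z}"])
  moreover have "inj_on (\<lambda>m. length z - m) ?W"
    unfolding seam_differing_offsets_def by (auto intro: inj_onI)
  ultimately have "card ?I + card ?W = card (?I \<union> (\<lambda>m. length z - m) ` ?W)"
    using finite_seam_differing_offsets
    by (subst card_Un_disjoint) (auto simp: card_image inner_differing_windows_def seam_differing_offsets_def)
  also have "\<dots> \<le> card {i. i < length z \<and> window_differs b z w i}"
    by (rule card_mono)
      (auto simp: window_differs_def inner_differing_windows_def seam_differing_offsets_def)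
  finally show ?thesis by (simp add: bsym_dist_eq_card_window_differs)
qed

lemma card_seam_differing_offsets_append_le:
  assumes len: "length y = length x" "length q = length p"
  shows "card (seam_differing_offsets b (x @ p) (y @ q) (length x) (length x))
       + card (seam_differing_offsets b (x @ p) (y @ q) (length x + length p) (length p))
       \<le> (b - 1) + card (seam_differing_offsets b x y (length x) (length x))
                 + card (seam_differing_offsets b p q (length p) (length p))"
  (is "card ?C1 + card ?C2 \<le> _ + card ?Wx + card ?Wp")
proof -
  have "?C1 \<inter> ?C2 \<subseteq> ?Wx \<union> ?Wp"
    using crossing_windows_not_both_differ[OF len] unfolding seam_differing_offsets_def by blast
  then have "card (?C1 \<inter> ?C2) \<le> card ?Wx + card ?Wp"
    by (meson card_Un_le card_mono finite_seam_differing_offsets finite_UnI le_trans)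
  moreover have "?C1 \<union> ?C2 \<subseteq> {0<..<b}" unfolding seam_differing_offsets_def by auto
  then have "card (?C1 \<union> ?C2) \<le> b - 1" using card_mono[of "{0<..<b}"] by fastforce
  moreover have "card ?C1 + card ?C2 = card (?C1 \<union> ?C2) + card (?C1 \<inter> ?C2)"
    by (intro card_Un_Int finite_seam_differing_offsets)
  ultimately show ?thesis by linarith
qed

lemma bsym_dist_append_le:
  assumes len: "length y = length x" "length q = length p"
  shows "bsym_dist b (x @ p) (y @ q) \<le> bsym_dist b x y + bsym_dist b p q + (b - 1)"
proof -
  let ?k = "length x" and ?r = "length p"
  let ?I = "inner_differing_windows b"
  let ?C1 = "seam_differing_offsets b (x @ p) (y @ q) ?k ?k"
  let ?C2 = "seam_differing_offsets b (x @ p) (y @ q) (?k + ?r) ?r"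
  have fin: "finite (?I z w)" for z w
    unfolding inner_differing_windows_def by (auto intro: finite_subset[of _ "{..length z}"])
  have "{i. i < length (x @ p) \<and> window_differs b (x @ p) (y @ q) i} \<subseteq>
        ?I x y \<union> (+) ?k ` ?I p q \<union> (\<lambda>m. ?k - m) ` ?C1 \<union> (\<lambda>m. ?k + ?r - m) ` ?C2"
  proof
    fix i assume "i \<in> {i. i < length (x @ p) \<and> window_differs b (x @ p) (y @ q) i}"
    then have i: "i < ?k + ?r" and differs: "window_differs b (x @ p) (y @ q) i" by auto
    show "i \<in> ?I x y \<union> (+) ?k ` ?I p q \<union> (\<lambda>m. ?k - m) ` ?C1 \<union> (\<lambda>m. ?k + ?r - m) ` ?C2"
      by (cases rule: window_differs_append_cases[OF len i differs])
        (use differs in \<open>auto simp: inner_differing_windows_def seam_differing_offsets_def\<close>)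
  qed
  then have "bsym_dist b (x @ p) (y @ q)
      \<le> card (?I x y \<union> (+) ?k ` ?I p q \<union> (\<lambda>m. ?k - m) ` ?C1 \<union> (\<lambda>m. ?k + ?r - m) ` ?C2)"
    unfolding bsym_dist_eq_card_window_differs
    by (intro card_mono) (simp_all add: fin finite_seam_differing_offsets)
  also have "\<dots> \<le> card (?I x y) + card ((+) ?k ` ?I p q) + card ((\<lambda>m. ?k - m) ` ?C1)
      + card ((\<lambda>m. ?k + ?r - m) ` ?C2)"
    by (meson add_mono card_Un_le order_trans order_refl)
  also have "\<dots> \<le> card (?I x y) + card (?I p q) + card ?C1 + card ?C2"
    by (intro add_mono card_image_le fin finite_seam_differing_offsets order_refl)
  finally show ?thesis
    using card_seam_differing_offsets_append_le[OF len, of b]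
      card_inner_plus_card_wrapping_le_bsym_dist[of b x y]
      card_inner_plus_card_wrapping_le_bsym_dist[of b p q]
    by linarith
qed

lemma card_differing_positions_le_bsym_dist:
  assumes "b > 0"
  shows "card {i. i < length z \<and> z ! i \<noteq> w ! i} \<le> bsym_dist b z w"
  unfolding bsym_dist_eq_card_window_differs window_differs_def
  by (rule card_mono) (use assms in \<open>auto intro!: exI[of _ 0]\<close>)

lemma bsym_dist_le_of_eq_except:
  assumes len: "length v = length u" and eq: "\<And>i. i < length u \<Longrightarrow> i \<noteq> j \<Longrightarrow> u ! i = v ! i"
  shows "bsym_dist b u v \<le> b"
proof -
  define D where "D = {i. i < length u \<and> window_differs b u v i}"
  define offset where "offset i = (LEAST l. l < b \<and> (i + l) mod length u = j)" for i
  have offset: "offset i < b \<and> (i + offset i) mod length u = j" if i: "i \<in> D" for i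
  proof -
    obtain l where "l < b" "u ! ((i + l) mod length u) \<noteq> v ! ((i + l) mod length u)"
      using i len unfolding D_def window_differs_def by auto
    moreover have "0 < length u" using i unfolding D_def by auto
    then have "(i + l) mod length u < length u" by simp
    ultimately have "l < b \<and> (i + l) mod length u = j" using eq by blast
    then show ?thesis unfolding offset_def by (rule LeastI)
  qed
  have "inj_on offset D"
  proof (rule inj_onI)
    fix i i' assume "i \<in> D" "i' \<in> D" "offset i = offset i'"
    then have "(i + offset i) mod length u = (i' + offset i) mod length u" using offset by metis
    then have "i mod length u = i' mod length u" by (simp add: nat_mod_eq_iff)
    moreover have "i < length u" "i' < length u" using \<open>i \<in> D\<close> \<open>i' \<in> D\<close> unfolding D_def by auto
    ultimately show "i = i'" by simp
  qed
  moreover have "offset ` D \<subseteq> {..<b}" using offset by auto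
  ultimately have "card D \<le> card {..<b}" by (meson card_inj_on_le finite_lessThan)
  then show ?thesis unfolding bsym_dist_eq_card_window_differs D_def by simp
qed

lemma exists_eq_except_with_distinct_values:
  assumes x: "x1 \<in> vecs k" "x2 \<in> vecs k" and f: "f x1 \<noteq> f x2"
  shows "\<exists>u\<in>vecs k. \<exists>v\<in>vecs k. \<exists>j. f u \<noteq> f v \<and> (\<forall>i<k. i \<noteq> j \<longrightarrow> u ! i = v ! i)"
proof (rule ccontr)
  assume no_pair: "\<not> ?thesis"
  define hybrid where "hybrid j = map (\<lambda>i. if i < j then x2 ! i else x1 ! i) [0..<k]" for j
  have hybrid_vecs: "hybrid j \<in> vecs k" for j unfolding hybrid_def vecs_def by simp
  have "\<forall>i<k. i \<noteq> j \<longrightarrow> hybrid j ! i = hybrid (Suc j) ! i" for j unfolding hybrid_def by simp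
  then have "f (hybrid j) = f (hybrid (Suc j))" for j using no_pair hybrid_vecs by blast
  then have "f (hybrid j) = f (hybrid 0)" for j by (induction j) auto
  moreover have "hybrid 0 = x1" "hybrid k = x2"
    using x unfolding hybrid_def vecs_def by (auto intro: nth_equalityI)
  ultimately show False using f by metis
qed

lemma card_image_ge_2_imp_nonconstant:
  assumes "2 \<le> card (f ` A)"
  shows "\<exists>x1\<in>A. \<exists>x2\<in>A. f x1 \<noteq> f x2"
proof (rule ccontr)
  assume const: "\<not> ?thesis"
  have "finite (f ` A)" using assms by (intro card_ge_0_finite) simp
  then have "card (f ` A) \<le> Suc 0"
    using const by (subst card_le_Suc0_iff_eq) blast+
  then show False using assms by simp
qed

text \<open>The repetition code only serves to show that the \<open>LEAST\<close> in \<^const>\<open>r_bf\<close> is attained.\<close>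

lemma fc_bsym_code_repetition:
  assumes "k > 0" "b > 0"
  shows "fc_bsym_code b k t f ((2 * t + 1) * k) (\<lambda>x. map (\<lambda>i. x ! (i mod k)) [0..<(2 * t + 1) * k])"
  unfolding fc_bsym_code_def
proof (intro conjI ballI impI)
  let ?p = "\<lambda>x. map (\<lambda>i. x ! (i mod k)) [0..<(2 * t + 1) * k]"
  fix x1 x2 assume x: "x1 \<in> vecs k" "x2 \<in> vecs k" and "f x1 \<noteq> f x2"
  then have "x1 \<noteq> x2" "length x1 = k" "length x2 = k" unfolding vecs_def by auto
  then obtain j where j: "j < k" "x1 ! j \<noteq> x2 ! j" using nth_equalityI by metis
  let ?copy = "\<lambda>m. k + (m * k + j)"
  have copy_lt: "m * k + j < (2 * t + 1) * k" if "m < 2 * t + 1" for m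
  proof -
    have "m * k + j < (m + 1) * k" using j by simp
    also have "\<dots> \<le> (2 * t + 1) * k" using that by (intro mult_right_mono) auto
    finally show ?thesis .
  qed
  have "?copy ` {..<2 * t + 1} \<subseteq> {i. i < length (x1 @ ?p x1) \<and> (x1 @ ?p x1) ! i \<noteq> (x2 @ ?p x2) ! i}"
    using x j copy_lt unfolding vecs_def by (auto simp: nth_append)
  then have "card (?copy ` {..<2 * t + 1})
      \<le> card {i. i < length (x1 @ ?p x1) \<and> (x1 @ ?p x1) ! i \<noteq> (x2 @ ?p x2) ! i}"
    by (rule card_mono[rotated]) auto
  also have "\<dots> \<le> bsym_dist b (x1 @ ?p x1) (x2 @ ?p x2)"
    using card_differing_positions_le_bsym_dist[OF assms(2)] .
  finally have "card (?copy ` {..<2 * t + 1}) \<le> bsym_dist b (x1 @ ?p x1) (x2 @ ?p x2)" .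
  moreover have "inj_on ?copy {..<2 * t + 1}" using j by (auto intro: inj_onI)
  ultimately show "2 * t + 1 \<le> bsym_dist b (x1 @ ?p x1) (x2 @ ?p x2)" by (simp add: card_image)
qed simp

lemma fc_bsym_code_r_bf:
  assumes "k > 0" "b > 0"
  shows "\<exists>p. fc_bsym_code b k t f (r_bf b f k t) p"
  unfolding r_bf_def by (rule LeastI_ex) (use fc_bsym_code_repetition[OF assms] in blast)

lemma fc_bsym_code_dist_bound:
  assumes code: "fc_bsym_code b k t f r p" and x: "x1 \<in> vecs k" "x2 \<in> vecs k" "f x1 \<noteq> f x2"
  shows "2 * t + 1 \<le> bsym_dist b x1 x2 + bsym_dist b (p x1) (p x2) + (b - 1)"
proof -
  have "2 * t + 1 \<le> bsym_dist b (x1 @ p x1) (x2 @ p x2)"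
    using code x unfolding fc_bsym_code_def by blast
  also have "\<dots> \<le> bsym_dist b x1 x2 + bsym_dist b (p x1) (p x2) + (b - 1)"
    using code x unfolding fc_bsym_code_def vecs_def by (intro bsym_dist_append_le) auto
  finally show ?thesis .
qed

lemma N_b_B1_le_of_fc_bsym_code:
  fixes p :: "'a::{finite,field} list \<Rightarrow> 'a list"
  assumes code: "fc_bsym_code b k t f r p" and "b > 0" and xs: "set xs \<subseteq> vecs k"
  shows "N_b TYPE('a) b (length xs) (B1 f b t xs) \<le> r"
  unfolding N_b_def
proof (rule Least_le, intro exI[of _ "\<lambda>i. p (xs ! i)"] conjI allI impI)
  have xs_vecs: "xs ! i \<in> vecs k" if "i < length xs" for i using xs that by auto
  fix i assume i: "i < length xs"
  then show "length (p (xs ! i)) = r" using code xs_vecs unfolding fc_bsym_code_def by blast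
  fix j assume j: "j < length xs"
  show "B1 f b t xs i j \<le> bsym_dist b (p (xs ! i)) (p (xs ! j))"
    using fc_bsym_code_dist_bound[OF code xs_vecs[OF i] xs_vecs[OF j]] \<open>b > 0\<close>
    unfolding B1_def by (auto simp: nat_le_iff)
qed

lemma fc_bsym_code_redundancy_ge:
  assumes code: "fc_bsym_code b k t f r p" and "b > 0"
    and x: "x1 \<in> vecs k" "x2 \<in> vecs k" "f x1 \<noteq> f x2"
  shows "2 * t + 2 \<le> r + 2 * b"
proof -
  obtain u v j where uv: "u \<in> vecs k" "v \<in> vecs k" "f u \<noteq> f v"
    and eq_except: "\<forall>i<k. i \<noteq> j \<longrightarrow> u ! i = v ! i"
    using exists_eq_except_with_distinct_values[OF x] by blast
  have "bsym_dist b u v \<le> b"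
    using uv eq_except unfolding vecs_def by (intro bsym_dist_le_of_eq_except) auto
  moreover have "bsym_dist b (p u) (p v) \<le> r"
    using code uv bsym_dist_le_length unfolding fc_bsym_code_def by metis
  ultimately show ?thesis using fc_bsym_code_dist_bound[OF code uv(1-3)] \<open>b > 0\<close> by linarith
qed

theorem corollary3p3:
  fixes f :: "'a::{finite,field} list \<Rightarrow> 'c"
    and k b t :: nat and xs :: "'a list list"
  assumes "k > 0" "b > 0" "t > 0"
    and "distinct xs" "set xs \<subseteq> vecs k"
  shows "r_bf b f k t \<ge> N_b TYPE('a) b (length xs) (B1 f b t xs) \<and>
         (card (f ` vecs k) \<ge> 2 \<and> t > b - 1 \<longrightarrow> r_bf b f k t \<ge> 2 * (t - b + 1))"
proof -
  obtain p :: "'a list \<Rightarrow> 'a list" where code: "fc_bsym_code b k t f (r_bf b f k t) p"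
    using fc_bsym_code_r_bf[OF assms(1,2)] by blast
  have "2 * (t - b + 1) \<le> r_bf b f k t" if image: "2 \<le> card (f ` vecs k)" and "t > b - 1"
  proof -
    obtain x1 x2 where "x1 \<in> vecs k" "x2 \<in> vecs k" "f x1 \<noteq> f x2"
      using card_image_ge_2_imp_nonconstant[OF image] by blast
    then have "2 * t + 2 \<le> r_bf b f k t + 2 * b"
      using fc_bsym_code_redundancy_ge[OF code assms(2)] by blast
    then show ?thesis using \<open>t > b - 1\<close> by arith
  qed
  then show ?thesis using N_b_B1_le_of_fc_bsym_code[OF code assms(2,5)] by blast
qed

end
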